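(* Let $f:\mathbb{R}^d\to\mathbb{R}$ be convex, symmetric and sign invariant, $g(w,x)=f_\sigma(wx^\top-\bar w\bar x^\top)$, and suppose there is $\kappa>0$ with $$g(w,x)-g(\bar w,\bar x)\ge\kappa\|wx^\top-\bar w\bar x^\top\|_F\quad\text{for all }(w,x)\in\mathbb{R}^{d_1}\times\mathbb{R}^{d_2}.$$ Then for every $(w,x)$ with $wx^\top\ne\bar w\bar x^\top$ and every $Y\in\partial f_\sigma(wx^\top-\bar w\bar x^\top)$, $\sigma_1(Y)+\sigma_2(Y)\ge\kappa$.
   Context: Let $d=\min\{d_1,d_2\}$ and $\sigma:\mathbb{R}^{d_1\times d_2}\to\mathbb{R}^d_+$ give singular values in nonincreasing order (with $\sigma_2:=0$ if $d=1$). $f$ is symmetric if $f(\pi s)=f(s)$ for all permutation matrices $\pi$, sign invariant if $f(Ds)=f(s)$ for all diagonal $D$ with entries in $\{\pm1\}$; $f_\sigma=f\circ\sigma$ is then convex and $\partial f_\sigma$ is its convex subdifferential. $\bar w\in\mathbb{R}^{d_1}$, $\bar x\in\mathbb{R}^{d_2}$ are fixed; $\|\cdot\|_F$ is the Frobenius norm. *)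

theory Defs
  imports "HOL-Analysis.Analysis"
begin

definition idx :: "'a::finite \<Rightarrow> nat" where
  "idx = (SOME h. bij_betw h (UNIV::'a set) {..<CARD('a)})"

definition is_singvals :: "real^'n::finite^'m::finite \<Rightarrow> (nat \<Rightarrow> real) \<Rightarrow> bool" where
  "is_singvals A s \<longleftrightarrow>
     (\<forall>k. 0 \<le> s k) \<and> (\<forall>k. s (Suc k) \<le> s k) \<and>
     (\<forall>k\<ge>min CARD('m) CARD('n). s k = 0) \<and>
     (\<exists>(U::real^'m^'m) (V::real^'n^'n).
        orthogonal_matrix U \<and> orthogonal_matrix V \<and>
        A = U ** (\<chi> i j. if idx i = idx j then s (idx i) else 0) ** transpose V)"

(* singvals A k = sigma_{k+1}(A)  (0-indexed); equals 0 for k >= d *)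
definition singvals :: "real^'n::finite^'m::finite \<Rightarrow> nat \<Rightarrow> real" where
  "singvals A = (THE s. is_singvals A s)"

(* sigma : R^{d1 x d2} -> R^d, with the type 'd of cardinality d = min d1 d2 *)
definition sigma_vec :: "real^'n::finite^'m::finite \<Rightarrow> real^'d::finite" where
  "sigma_vec A = (\<chi> i. singvals A (idx i))"

definition symmetric_fun :: "(real^'d::finite \<Rightarrow> real) \<Rightarrow> bool" where
  "symmetric_fun f \<longleftrightarrow> (\<forall>p s. p permutes (UNIV::'d set) \<longrightarrow> f (\<chi> i. s $ p i) = f s)"

definition sign_invariant :: "(real^'d::finite \<Rightarrow> real) \<Rightarrow> bool" where
  "sign_invariant f \<longleftrightarrow> (\<forall>e s. (\<forall>i. e i = 1 \<or> e i = -1) \<longrightarrow> f (\<chi> i. e i * s $ i) = f s)"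

(* convex subdifferential, w.r.t. the trace (Frobenius) inner product *)
definition subdiff :: "('a::real_inner \<Rightarrow> real) \<Rightarrow> 'a \<Rightarrow> 'a set" where
  "subdiff F X = {Y. \<forall>Z. F Z \<ge> F X + inner Y (Z - X)}"

definition outer :: "real^'m::finite \<Rightarrow> real^'n::finite \<Rightarrow> real^'n^'m" where
  "outer w x = (\<chi> i j. w $ i * x $ j)"

end

theory Submission
  imports Defs "HOL-Computational_Algebra.Polynomial"
begin

(* Testing the subgradient inequality at X = w x^T - wbar xbar^T against the point 0 and using
   sharpness gives kappa * |X|_F <= <Y, X>.  For X of rank at most two,
   <Y, X> <= (sigma_1(Y) + sigma_2(Y)) * |X|_F: after the orthogonal change of variables given by
   a singular value decomposition, Y becomes diag(s) = (s_1 - s_2) E_11 + diag(t) with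
   |t_k| <= s_2; the first part pairs with X to at most (s_1 - s_2) |X|_F, and writing
   X = a b^T - c e^T with a orthogonal to c, diag(t) pairs with each rank-one term to at most s_2
   times its norm, which is at most |X|_F.
   Since singvals is a definite description, singular values must also be shown to exist and to be
   unique: existence by the variational construction (maximise |Y v| over unit vectors v
   orthogonal to the previously chosen ones), uniqueness because their squares are the
   nonincreasingly ordered roots of det (x I - Y^T Y). *)

section \<open>Indexing and rectangular diagonal matrices\<close>

lemma bij_betw_idx: "bij_betw (idx::'a::finite \<Rightarrow> nat) UNIV {..<CARD('a)}"
proof -
  have "\<exists>h. bij_betw h (UNIV::'a set) {..<CARD('a)}"
    using ex_bij_betw_finite_nat[of "UNIV::'a set"] by (simp add: atLeast0LessThan)
  then show ?thesis unfolding idx_def by (rule someI_ex)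
qed

lemma idx_eq_iff [simp]: "idx (i::'a::finite) = idx j \<longleftrightarrow> i = j"
  using bij_betw_idx by (auto simp: bij_betw_def dest: injD)

lemma idx_less_card [simp]: "idx (i::'a::finite) < CARD('a)"
  using bij_betw_idx bij_betwE by blast

lemma ex_idx_eq: "k < CARD('a) \<Longrightarrow> \<exists>i::'a::finite. idx i = k"
  using bij_betw_idx unfolding bij_betw_def by (metis imageE lessThan_iff)

definition diag_mat :: "(nat \<Rightarrow> real) \<Rightarrow> real^'n::finite^'m::finite" where
  "diag_mat s = (\<chi> i j. if idx i = idx j then s (idx i) else 0)"

lemma is_singvals_iff:
  fixes A :: "real^'n::finite^'m::finite"
  shows "is_singvals A s \<longleftrightarrow>
     (\<forall>k. 0 \<le> s k) \<and> (\<forall>k. s (Suc k) \<le> s k) \<and> (\<forall>k\<ge>min CARD('m) CARD('n). s k = 0) \<and>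
     (\<exists>U V. orthogonal_matrix U \<and> orthogonal_matrix V \<and> A = U ** diag_mat s ** transpose V)"
  unfolding is_singvals_def diag_mat_def ..

section \<open>Pairing a diagonal matrix with a matrix of rank two\<close>

lemma inner_outer: "inner (M::real^'n::finite^'m::finite) (outer a b) = inner a (M *v b)"
  by (simp add: inner_vec_def outer_def matrix_vector_mult_def sum_distrib_left
      algebra_simps sum_distrib_right)

lemma norm_outer_diff_power2:
  "(norm (outer (a::real^'m::finite) (b::real^'n::finite) - outer c e))^2
     = (a \<bullet> a) * (b \<bullet> b) + (c \<bullet> c) * (e \<bullet> e) - 2 * (a \<bullet> c) * (b \<bullet> e)"
proof -
  have "(norm (outer a b - outer c e))^2 = (\<Sum>i\<in>UNIV. \<Sum>j\<in>UNIV. (a$i * b$j - c$i * e$j)^2)"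
    unfolding power2_norm_eq_inner by (simp add: inner_vec_def outer_def power2_eq_square)
  also have "\<dots> = (\<Sum>i\<in>UNIV. \<Sum>j\<in>UNIV. (a$i * a$i) * (b$j * b$j) + (c$i * c$i) * (e$j * e$j)
                      - 2 * ((a$i * c$i) * (b$j * e$j)))"
    by (intro sum.cong refl) (simp add: power2_eq_square algebra_simps)
  also have "\<dots> = (a \<bullet> a) * (b \<bullet> b) + (c \<bullet> c) * (e \<bullet> e) - 2 * (a \<bullet> c) * (b \<bullet> e)"
    by (simp add: inner_vec_def sum_product sum.distrib sum_subtractf sum_distrib_left[of 2] mult.assoc)
  finally show ?thesis .
qed

lemma L2_set_vec_nth: "L2_set (\<lambda>i. x $ i) UNIV = norm (x::real^'n::finite)"
  by (simp add: norm_vec_def L2_set_def)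

lemma L2_set_subset_le: "finite B \<Longrightarrow> A \<subseteq> B \<Longrightarrow> L2_set f A \<le> L2_set f B"
  by (simp add: L2_set_def sum_mono2)

lemma inner_diag_mat_outer_le:
  fixes x :: "real^'m::finite" and y :: "real^'n::finite"
  assumes t: "\<And>k. \<bar>t k\<bar> \<le> L"
  shows "inner (diag_mat t) (outer x y) \<le> L * norm x * norm y"
proof -
  define P where "P = {(i::'m, j::'n). idx i = idx j}"
  have L0: "0 \<le> L" using t by (meson abs_ge_zero order.trans)
  have inj_fst: "inj_on fst P" and inj_snd: "inj_on snd P"
    unfolding P_def inj_on_def by (auto dest: sym)
  have "inner (diag_mat t) (outer x y)
      = (\<Sum>p\<in>UNIV. if p \<in> P then t (idx (fst p)) * (x $ fst p * y $ snd p) else 0)"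
    by (simp add: inner_vec_def diag_mat_def outer_def P_def sum.cartesian_product
        UNIV_Times_UNIV[symmetric] case_prod_beta del: UNIV_Times_UNIV)
       (intro sum.cong refl, simp)
  also have "\<dots> = (\<Sum>p\<in>P. t (idx (fst p)) * (x $ fst p * y $ snd p))"
    by (simp add: sum.If_cases)
  also have "\<dots> \<le> (\<Sum>p\<in>P. L * (\<bar>x $ fst p\<bar> * \<bar>y $ snd p\<bar>))"
    by (rule sum_mono, rule order.trans[OF abs_ge_self]) (use t in \<open>simp add: abs_mult mult_right_mono\<close>)
  also have "\<dots> \<le> L * (L2_set (\<lambda>p. x $ fst p) P * L2_set (\<lambda>p. y $ snd p) P)"
    unfolding sum_distrib_left[symmetric] using L0 by (intro mult_left_mono L2_set_mult_ineq)
  also have "\<dots> \<le> L * (norm x * norm y)"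
  proof -
    have "L2_set (\<lambda>p. x $ fst p) P \<le> norm x"
      using L2_set_subset_le[of UNIV "fst ` P" "\<lambda>i. x $ i"]
      by (simp add: L2_set_def sum.reindex[OF inj_fst] L2_set_vec_nth[symmetric])
    moreover have "L2_set (\<lambda>p. y $ snd p) P \<le> norm y"
      using L2_set_subset_le[of UNIV "snd ` P" "\<lambda>j. y $ j"]
      by (simp add: L2_set_def sum.reindex[OF inj_snd] L2_set_vec_nth[symmetric])
    ultimately show ?thesis using L0 by (intro mult_left_mono mult_mono) auto
  qed
  finally show ?thesis by (simp add: mult.assoc)
qed

lemma outer_diff_orthogonal_decomp:
  fixes a c :: "real^'m::finite" and b e :: "real^'n::finite"
  obtains b' c' where "a \<bullet> c' = 0" "outer a b - outer c e = outer a b' - outer c' e"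
proof -
  define \<tau> where "\<tau> = (a \<bullet> c) / (a \<bullet> a)"
  have "a \<bullet> (c - \<tau> *\<^sub>R a) = 0"
    by (cases "a = 0") (simp_all add: \<tau>_def inner_diff_right)
  moreover have "outer a b - outer c e = outer a (b - \<tau> *\<^sub>R e) - outer (c - \<tau> *\<^sub>R a) e"
    by (simp add: outer_def vec_eq_iff algebra_simps)
  ultimately show ?thesis by (rule that)
qed

lemma norm_outer_diff_orthogonal_bounds:
  fixes a c :: "real^'m::finite" and b e :: "real^'n::finite"
  assumes "a \<bullet> c = 0"
  shows "norm a * norm b \<le> norm (outer a b - outer c e)"
    and "norm c * norm e \<le> norm (outer a b - outer c e)"
proof -
  have N: "(norm (outer a b - outer c e))^2 = (norm a * norm b)^2 + (norm c * norm e)^2"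
    unfolding norm_outer_diff_power2 assms by (simp add: power_mult_distrib power2_norm_eq_inner)
  show "norm a * norm b \<le> norm (outer a b - outer c e)"
    by (rule power2_le_imp_le) (simp_all add: N)
  show "norm c * norm e \<le> norm (outer a b - outer c e)"
    by (rule power2_le_imp_le) (simp_all add: N)
qed

lemma inner_diag_mat_rank_two_le:
  fixes a c :: "real^'m::finite" and b e :: "real^'n::finite"
  assumes t: "\<And>k. \<bar>t k\<bar> \<le> L"
  shows "inner (diag_mat t) (outer a b - outer c e) \<le> 2 * L * norm (outer a b - outer c e)"
proof -
  let ?X = "outer a b - outer c e"
  obtain b' c' where ac': "a \<bullet> c' = 0" and X: "?X = outer a b' - outer c' e"
    by (rule outer_diff_orthogonal_decomp)
  have "inner (diag_mat t) ?X = inner (diag_mat t) (outer a b') + inner (diag_mat t) (outer (- c') e)"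
  proof -
    have "outer a b' - outer c' e = outer a b' + outer (- c') e"
      by (simp add: outer_def vec_eq_iff)
    then show ?thesis by (simp only: X inner_add_right)
  qed
  also have "\<dots> \<le> L * norm a * norm b' + L * norm (- c') * norm e"
    using t by (intro add_mono inner_diag_mat_outer_le)
  also have "\<dots> = L * (norm a * norm b') + L * (norm c' * norm e)"
    by (simp add: mult.assoc)
  also have "\<dots> \<le> L * norm ?X + L * norm ?X"
    using norm_outer_diff_orthogonal_bounds[OF ac', where b = b' and e = e] t
    unfolding X by (intro add_mono mult_left_mono) (auto intro: order.trans[OF abs_ge_zero])
  finally show ?thesis by simp
qed

lemma diag_mat_add: "diag_mat (\<lambda>k. s k + t k) = diag_mat s + diag_mat t"
  by (simp add: diag_mat_def vec_eq_iff)

lemma inner_diag_mat_first_le: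
  assumes "0 \<le> c"
  shows "inner (diag_mat (\<lambda>k. if k = 0 then c else 0)) (X::real^'n::finite^'m::finite) \<le> c * norm X"
proof -
  obtain i0 :: 'm where i0: "idx i0 = 0" using ex_idx_eq[of 0] by auto
  obtain j0 :: 'n where j0: "idx j0 = 0" using ex_idx_eq[of 0] by auto
  have "inner (diag_mat (\<lambda>k. if k = 0 then c else 0)) X = c * X $ i0 $ j0"
  proof -
    have "(\<Sum>j\<in>UNIV. (if idx i = idx j then if idx i = 0 then c else 0 else 0) * X $ i $ j)
        = (if i = i0 then c * X $ i0 $ j0 else 0)" for i
    proof (cases "i = i0")
      case True
      then have "(if idx i = idx j then if idx i = 0 then c else 0 else 0) * X $ i $ j
          = (if j = j0 then c * X $ i0 $ j0 else 0)" for j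
        using i0 j0 by (metis idx_eq_iff mult_zero_left)
      then show ?thesis using True by simp
    qed (use i0 in \<open>simp add: idx_eq_iff[of i i0, symmetric]\<close>)
    then show ?thesis
      by (simp add: inner_vec_def diag_mat_def)
  qed
  also have "\<dots> \<le> c * norm X"
    using component_le_norm_cart[of "X $ i0" j0] Finite_Cartesian_Product.norm_nth_le[of X i0]
    by (intro mult_left_mono assms) linarith
  finally show ?thesis .
qed

lemma inner_diag_mat_rank_two_le_two_largest:
  fixes a c :: "real^'m::finite" and b e :: "real^'n::finite"
  assumes s0: "\<forall>k. 0 \<le> s k" and sdec: "\<forall>k. s (Suc k) \<le> s k"
  shows "inner (diag_mat s) (outer a b - outer c e) \<le> (s 0 + s 1) * norm (outer a b - outer c e)"
proof -
  let ?X = "outer a b - outer c e"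
  define t where "t k = (if k = 0 then s 1 else s k)" for k
  have "s k \<le> s 1" if "1 \<le> k" for k
    using lift_Suc_antimono_le[of s, OF _ that] sdec by blast
  then have t: "\<bar>t k\<bar> \<le> s 1" for k
    using s0 by (auto simp: t_def)
  have "(diag_mat s :: real^'n^'m) = diag_mat (\<lambda>k. if k = 0 then s 0 - s 1 else 0) + diag_mat t"
    unfolding diag_mat_add[symmetric] by (rule arg_cong[where f = diag_mat]) (auto simp: t_def)
  then have "inner (diag_mat s) ?X
      = inner (diag_mat (\<lambda>k. if k = 0 then s 0 - s 1 else 0)) ?X + inner (diag_mat t) ?X"
    by (simp add: inner_add_left)
  also have "\<dots> \<le> (s 0 - s 1) * norm ?X + 2 * s 1 * norm ?X"
    using sdec by (intro add_mono inner_diag_mat_first_le inner_diag_mat_rank_two_le t) auto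
  finally show ?thesis by (simp add: algebra_simps)
qed

lemma inner_orthogonal_matrix_mult:
  assumes "orthogonal_matrix (Q::real^'n::finite^'n)"
  shows "(Q *v x) \<bullet> (Q *v y) = x \<bullet> y"
  using assms orthogonal_transformation_matrix[of "(*v) Q"]
  by (simp add: orthogonal_transformation_def matrix_of_matrix_vector_mul)

lemma inner_svd_outer:
  fixes U :: "real^'m::finite^'m" and V :: "real^'n::finite^'n" and D :: "real^'n^'m"
  shows "inner (U ** D ** transpose V) (outer a b)
       = inner D (outer (transpose U *v a) (transpose V *v b))"
proof -
  have "inner (U ** D ** transpose V) (outer a b) = inner a (U *v (D *v (transpose V *v b)))"
    by (simp add: inner_outer matrix_vector_mul_assoc matrix_mul_assoc del: transpose_matrix_vector)
  also have "\<dots> = inner (transpose U *v a) (D *v (transpose V *v b))"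
    by (simp add: dot_lmul_matrix[symmetric])
  finally show ?thesis
    by (simp add: inner_outer del: transpose_matrix_vector)
qed

lemma is_singvals_inner_rank_two_le:
  fixes Y :: "real^'n::finite^'m::finite"
  assumes "is_singvals Y s"
  shows "inner Y (outer a b - outer c e) \<le> (s 0 + s 1) * norm (outer a b - outer c e)"
proof -
  obtain U V where U: "orthogonal_matrix U" and V: "orthogonal_matrix V"
    and Y: "Y = U ** diag_mat s ** transpose V"
    and s0: "\<forall>k. 0 \<le> s k" and sdec: "\<forall>k. s (Suc k) \<le> s k"
    using assms unfolding is_singvals_iff by blast
  let ?a = "transpose U *v a" and ?b = "transpose V *v b"
    and ?c = "transpose U *v c" and ?e = "transpose V *v e"
  have "inner Y (outer a b - outer c e) = inner (diag_mat s) (outer ?a ?b - outer ?c ?e)"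
    unfolding Y inner_diff_right inner_svd_outer ..
  also have "\<dots> \<le> (s 0 + s 1) * norm (outer ?a ?b - outer ?c ?e)"
    using s0 sdec by (rule inner_diag_mat_rank_two_le_two_largest)
  also have "norm (outer ?a ?b - outer ?c ?e) = norm (outer a b - outer c e)"
    by (rule power2_eq_imp_eq) (use U V in
        \<open>simp_all add: norm_outer_diff_power2 inner_orthogonal_matrix_mult del: transpose_matrix_vector\<close>)
  finally show ?thesis .
qed

section \<open>Uniqueness of singular values\<close>

lemma matrix_diff_ldistrib: "(A::'a::ring_1^'n^'m) ** (B - C) = A ** B - A ** (C::'a^'p^'n)"
  by (simp add: matrix_matrix_mult_def vec_eq_iff sum_subtractf algebra_simps)

lemma matrix_diff_rdistrib: "((A::'a::ring_1^'n^'m) - B) ** (C::'a^'p^'n) = A ** C - B ** C"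
  by (simp add: matrix_matrix_mult_def vec_eq_iff sum_subtractf algebra_simps)

lemma transpose_diag_mat_mult_diag_mat:
  assumes "\<And>k. min CARD('m) CARD('n) \<le> k \<Longrightarrow> s k = 0"
  shows "transpose (diag_mat s :: real^'n::finite^'m::finite) ** diag_mat s
           = (diag_mat (\<lambda>k. (s k)^2) :: real^'n^'n)"
proof -
  have "(\<Sum>i::'m\<in>UNIV. (if idx i = idx j then s (idx i) else 0) * (if idx i = idx k then s (idx i) else 0))
      = (if j = k then (s (idx j))^2 else 0)" for j k :: 'n
  proof (cases "idx j < CARD('m)")
    case True
    then obtain i0 :: 'm where i0: "idx i0 = idx j" using ex_idx_eq by blast
    have "(if idx i = idx j then s (idx i) else 0) * (if idx i = idx k then s (idx i) else 0)
        = (if i = i0 then if j = k then (s (idx j))^2 else 0 else 0)" for i :: 'm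
      using i0 by (auto simp: power2_eq_square dest: sym)
    then show ?thesis by simp
  next
    case False
    then have "s (idx j) = 0" using assms by simp
    moreover have "idx i \<noteq> idx j" for i :: 'm using False idx_less_card by metis
    ultimately show ?thesis by auto
  qed
  then show ?thesis
    by (simp add: matrix_matrix_mult_def diag_mat_def vec_eq_iff transpose_def)
qed

lemma det_orthogonal_conj:
  assumes "orthogonal_matrix (V::real^'n::finite^'n)"
  shows "det (V ** A ** transpose V) = det A"
proof -
  have "det V * det V = 1"
    using det_orthogonal_matrix[OF assms] by auto
  then show ?thesis
    by (simp add: det_mul det_transpose algebra_simps)
qed

lemma det_charmat_is_singvals:
  fixes Y :: "real^'n::finite^'m::finite"
  assumes "is_singvals Y s"
  shows "det (mat x - transpose Y ** Y) = (\<Prod>k<CARD('n). x - (s k)^2)"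
proof -
  obtain U V where U: "orthogonal_matrix U" and V: "orthogonal_matrix V"
    and Y: "Y = U ** diag_mat s ** transpose V" and sz: "\<forall>k\<ge>min CARD('m) CARD('n). s k = 0"
    using assms unfolding is_singvals_iff by blast
  let ?L = "diag_mat (\<lambda>k. (s k)^2) :: real^'n^'n"
  have "transpose Y ** Y = V ** (transpose (diag_mat s) ** (transpose U ** U) ** diag_mat s) ** transpose V"
    unfolding Y by (simp add: matrix_transpose_mul matrix_mul_assoc)
  also have "\<dots> = V ** ?L ** transpose V"
    using U sz by (simp add: orthogonal_matrix transpose_diag_mat_mult_diag_mat)
  finally have YY: "transpose Y ** Y = V ** ?L ** transpose V" .
  have "V ** mat x ** transpose V = mat x"
  proof -
    have "mat x = x *\<^sub>R (mat 1 :: real^'n^'n)" by (simp add: mat_def vec_eq_iff)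
    then show ?thesis
      using V by (simp add: matrix_scalar_ac scalar_matrix_assoc[symmetric] orthogonal_matrix_def)
  qed
  then have "mat x - transpose Y ** Y = V ** (mat x - ?L) ** transpose V"
    by (simp add: YY matrix_diff_ldistrib matrix_diff_rdistrib)
  then have "det (mat x - transpose Y ** Y) = det (mat x - ?L)"
    by (simp add: det_orthogonal_conj[OF V])
  also have "\<dots> = (\<Prod>j\<in>UNIV. x - (s (idx (j::'n)))^2)"
    by (subst det_diagonal) (auto simp: diag_mat_def mat_def)
  also have "\<dots> = (\<Prod>k<CARD('n). x - (s k)^2)"
    using prod.reindex_bij_betw[OF bij_betw_idx, of "\<lambda>k. x - (s k)^2"] by simp
  finally show ?thesis .
qed

lemma decreasing_roots_unique:
  fixes a b :: "nat \<Rightarrow> 'a::linordered_idom"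
  assumes "\<forall>k. a (Suc k) \<le> a k" "\<forall>k. b (Suc k) \<le> b k"
    and "(\<Prod>k<n. [:- a k, 1:]) = (\<Prod>k<n. [:- b k, 1:])"
  shows "\<forall>k<n. a k = b k"
  using assms
proof (induction n arbitrary: a b)
  case 0
  then show ?case by simp
next
  case (Suc n)
  have root: "\<exists>j. c r = d j" if "r < Suc n" "(\<Prod>k<Suc n. [:- c k, 1:]) = (\<Prod>k<Suc n. [:- d k, 1:])"
    for c d :: "nat \<Rightarrow> 'a" and r
  proof -
    have "poly (\<Prod>k<Suc n. [:- d k, 1:]) (c r) = 0"
      unfolding that(2)[symmetric] poly_prod by (rule prod_zero) (use that(1) in auto)
    then show ?thesis by (auto simp: poly_prod)
  qed
  have "b j \<le> b 0" "a j \<le> a 0" for j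
    using lift_Suc_antimono_le[of b 0 j] lift_Suc_antimono_le[of a 0 j] Suc.prems(1,2) by auto
  moreover obtain i j where "a 0 = b j" "b 0 = a i"
    using root[of 0 a b] root[of 0 b a] Suc.prems(3) by auto
  ultimately have a0: "a 0 = b 0"
    by (metis order.antisym)
  have factored: "[:- a 0, 1:] * (\<Prod>k<n. [:- a (Suc k), 1:]) = [:- a 0, 1:] * (\<Prod>k<n. [:- b (Suc k), 1:])"
    using Suc.prems(3) by (simp only: a0 prod.lessThan_Suc_shift)
  have "[:- a 0, 1:] \<noteq> 0"
    by simp
  then have "(\<Prod>k<n. [:- a (Suc k), 1:]) = (\<Prod>k<n. [:- b (Suc k), 1:])"
    using factored by (rule mult_left_cancel[THEN iffD1])
  then have "\<forall>k<n. a (Suc k) = b (Suc k)"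
    using Suc.IH[of "\<lambda>k. a (Suc k)" "\<lambda>k. b (Suc k)"] Suc.prems(1,2) by blast
  then show ?case
    using a0 by (auto simp: less_Suc_eq_0_disj)
qed

lemma is_singvals_unique:
  fixes Y :: "real^'n::finite^'m::finite"
  assumes s: "is_singvals Y s" and t: "is_singvals Y t"
  shows "s = t"
proof
  fix k
  have sp: "\<forall>k. 0 \<le> s k" "\<forall>k. s (Suc k) \<le> s k" "\<forall>k\<ge>min CARD('m) CARD('n). s k = 0"
    using s unfolding is_singvals_iff by blast+
  have tp: "\<forall>k. 0 \<le> t k" "\<forall>k. t (Suc k) \<le> t k" "\<forall>k\<ge>min CARD('m) CARD('n). t k = 0"
    using t unfolding is_singvals_iff by blast+
  have "(\<Prod>k<CARD('n). [:- (s k ^ 2), 1:]) = (\<Prod>k<CARD('n). [:- (t k ^ 2), 1:])"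
    unfolding poly_eq_poly_eq_iff[symmetric]
    using det_charmat_is_singvals[OF s] det_charmat_is_singvals[OF t] by (simp add: poly_prod fun_eq_iff)
  then have "\<forall>k<CARD('n). (s k)^2 = (t k)^2"
    by (rule decreasing_roots_unique[rotated 2]) (use sp tp in \<open>simp_all add: power_mono\<close>)
  then show "s k = t k"
    using sp tp by (cases "k < CARD('n)") (auto simp: power2_eq_iff_nonneg)
qed

section \<open>Existence of a singular value decomposition\<close>

definition orthonormal_seq :: "(nat \<Rightarrow> 'a::real_inner) \<Rightarrow> nat \<Rightarrow> bool" where
  "orthonormal_seq v k \<longleftrightarrow> (\<forall>i<k. \<forall>j<k. v i \<bullet> v j = (if i = j then 1 else 0))"

lemma orthonormal_seq_upd:
  assumes "orthonormal_seq v k" "\<forall>i<k. x \<bullet> v i = 0" "norm x = 1"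
  shows "orthonormal_seq (v(k := x)) (Suc k)"
  using assms unfolding orthonormal_seq_def
  by (auto simp: less_Suc_eq inner_commute norm_eq_1)

lemma ex_unit_orthogonal:
  fixes v :: "nat \<Rightarrow> real^'n::finite"
  assumes "k < CARD('n)"
  obtains z where "norm z = 1" "\<forall>i<k. z \<bullet> v i = 0"
proof -
  let ?S = "v ` {..<k}"
  have "dim ?S \<le> card ?S" by (rule dim_le_card') simp
  also have "\<dots> \<le> k" using card_image_le[of "{..<k}" v] by simp
  finally have "dim ?S < DIM(real^'n)" using assms by simp
  then obtain x where x: "x \<noteq> 0" and orth: "\<And>y. y \<in> span ?S \<Longrightarrow> orthogonal x y"
    using orthogonal_to_subspace_exists by blast
  show ?thesis
  proof
    show "norm (x /\<^sub>R norm x) = 1" using x by simp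
    show "\<forall>i<k. (x /\<^sub>R norm x) \<bullet> v i = 0" using orth by (auto simp: orthogonal_def span_base)
  qed
qed

lemma ex_unit_direction_orthogonal:
  fixes x :: "real^'m::finite" and u :: "nat \<Rightarrow> real^'m"
  assumes "k < CARD('m)" "\<forall>i<k. x \<bullet> u i = 0"
  obtains y where "norm y = 1" "\<forall>i<k. y \<bullet> u i = 0" "x = norm x *\<^sub>R y"
proof (cases "x = 0")
  case True
  then show ?thesis using ex_unit_orthogonal[OF assms(1)] that by (metis norm_zero scale_zero_left)
next
  case False
  then show ?thesis using assms(2) by (intro that[of "x /\<^sub>R norm x"]) auto
qed

lemma orthonormal_seq_extend:
  fixes u :: "nat \<Rightarrow> real^'m::finite"
  assumes "orthonormal_seq u k" "k \<le> j" "j \<le> CARD('m)"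
  shows "\<exists>u'. orthonormal_seq u' j \<and> (\<forall>i<k. u' i = u i)"
  using assms(2,3)
proof (induction j rule: dec_induct)
  case base
  then show ?case using assms(1) by blast
next
  case (step n)
  then obtain u' where u': "orthonormal_seq u' n" "\<forall>i<k. u' i = u i" by auto
  obtain z where "norm z = 1" "\<forall>i<n. z \<bullet> u' i = 0"
    using ex_unit_orthogonal step.prems by (metis Suc_le_lessD)
  then have "orthonormal_seq (u'(n := z)) (Suc n)"
    using u'(1) by (intro orthonormal_seq_upd) auto
  moreover have "\<forall>i<k. (u'(n := z)) i = u i"
    using u'(2) step.hyps by simp
  ultimately show ?case by blast
qed

lemma quadratic_nonpos_imp_linear_coeff_zero:
  fixes p c :: real
  assumes "\<And>t. 2 * t * p + t^2 * c \<le> 0"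
  shows "p = 0"
proof -
  define q where "q = \<bar>c\<bar> + 1"
  have q: "q > 0" "2 * q + c > 0" unfolding q_def by (simp_all add: abs_if)
  have "(2 * (p / q) * p + (p / q)^2 * c) * q^2 \<le> 0"
    using assms by (rule mult_nonpos_nonneg) simp
  also have "(2 * (p / q) * p + (p / q)^2 * c) * q^2 = p^2 * (2 * q + c)"
    using q by (simp add: field_simps power2_eq_square)
  finally have "p^2 \<le> 0"
    using q by (simp add: mult_le_0_iff)
  then show ?thesis by simp
qed

lemma norm_maximiser_image_orthogonal:
  fixes f :: "'a::real_inner \<Rightarrow> 'b::real_inner"
  assumes "linear f"
    and max: "\<And>t. norm (f (v + t *\<^sub>R w)) \<le> norm (f v) * norm (v + t *\<^sub>R w)"
    and "norm v = 1" and "v \<bullet> w = 0"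
  shows "f v \<bullet> f w = 0"
proof (rule quadratic_nonpos_imp_linear_coeff_zero)
  fix t
  have "(norm (f (v + t *\<^sub>R w)))^2 \<le> (norm (f v))^2 * (norm (v + t *\<^sub>R w))^2"
    unfolding power_mult_distrib[symmetric] using max by (intro power_mono) auto
  also have "(norm (f (v + t *\<^sub>R w)))^2 = (norm (f v))^2 + 2 * t * (f v \<bullet> f w) + t^2 * (f w \<bullet> f w)"
    using \<open>linear f\<close> unfolding power2_norm_eq_inner
    by (simp add: linear_add linear_scale inner_add_left inner_add_right
        inner_commute algebra_simps power2_eq_square)
  also have "(norm (v + t *\<^sub>R w))^2 = 1 + t^2 * (w \<bullet> w)"
    using assms(3,4) unfolding power2_norm_eq_inner
    by (simp add: inner_add_left inner_add_right inner_commute algebra_simps power2_eq_square norm_eq_1)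
  finally show "2 * t * (f v \<bullet> f w) + t^2 * ((f w \<bullet> f w) - (norm (f v))^2 * (w \<bullet> w)) \<le> 0"
    by (simp add: algebra_simps)
qed

lemma ex_norm_image_maximiser:
  fixes Y :: "real^'n::finite^'m::finite" and v :: "nat \<Rightarrow> real^'n"
  assumes "k < CARD('n)"
  obtains z where "norm z = 1" "\<forall>i<k. z \<bullet> v i = 0"
    "\<And>w. \<forall>i<k. w \<bullet> v i = 0 \<Longrightarrow> norm (Y *v w) \<le> norm (Y *v z) * norm w"
proof -
  define K where "K = (\<Inter>i<k. {w. v i \<bullet> w = 0}) \<inter> sphere 0 1"
  have "closed (\<Inter>i<k. {w. v i \<bullet> w = 0})"
    by (rule closed_INT) (simp add: closed_hyperplane)
  then have cK: "compact K"
    unfolding K_def by (rule closed_Int_compact) simp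
  obtain z0 where "norm z0 = 1" "\<forall>i<k. z0 \<bullet> v i = 0"
    using ex_unit_orthogonal[OF assms] by blast
  then have neK: "K \<noteq> {}"
    unfolding K_def by (auto simp: inner_commute)
  have "continuous_on K (\<lambda>w. norm (Y *v w))"
    by (intro continuous_on_norm linear_continuous_on matrix_vector_mul_bounded_linear)
  then obtain z where z: "z \<in> K" and zmax: "\<And>w. w \<in> K \<Longrightarrow> norm (Y *v w) \<le> norm (Y *v z)"
    using continuous_attains_sup[OF cK neK] by blast
  show ?thesis
  proof
    show "norm z = 1" "\<forall>i<k. z \<bullet> v i = 0"
      using z by (auto simp: K_def inner_commute)
    fix w assume w: "\<forall>i<k. w \<bullet> v i = 0"
    show "norm (Y *v w) \<le> norm (Y *v z) * norm w"
    proof (cases "w = 0")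
      case False
      then have "norm (Y *v (w /\<^sub>R norm w)) \<le> norm (Y *v z)"
        using w by (intro zmax) (auto simp: K_def inner_commute)
      then show ?thesis
        using False by (simp add: matrix_vector_mult_scaleR field_simps)
    qed simp
  qed
qed

(* The last conjunct is the invariant that makes the next maximiser's image orthogonal to the
   earlier u j and its norm at most s (k - 1). *)
definition partial_svd ::
    "real^'n::finite^'m::finite \<Rightarrow> nat \<Rightarrow> (nat \<Rightarrow> real^'n) \<Rightarrow> (nat \<Rightarrow> real^'m) \<Rightarrow> (nat \<Rightarrow> real) \<Rightarrow> bool"
  where
  "partial_svd Y k v u s \<longleftrightarrow> orthonormal_seq v k \<and> orthonormal_seq u k \<and>
     (\<forall>j<k. Y *v v j = s j *\<^sub>R u j) \<and> (\<forall>j<k. 0 \<le> s j) \<and> (\<forall>j. Suc j < k \<longrightarrow> s (Suc j) \<le> s j) \<and>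
     (\<forall>w. (\<forall>i<k. w \<bullet> v i = 0) \<longrightarrow>
        (\<forall>j<k. (Y *v w) \<bullet> u j = 0) \<and> (0 < k \<longrightarrow> norm (Y *v w) \<le> s (k - 1) * norm w))"

lemma maximiser_direction_orthogonal_image:
  fixes Y :: "real^'n::finite^'m::finite"
  assumes zmax: "\<And>w. \<forall>i<k. w \<bullet> v i = 0 \<Longrightarrow> norm (Y *v w) \<le> norm (Y *v z) * norm w"
    and nz: "norm z = 1" and zv: "\<forall>i<k. z \<bullet> v i = 0" and Yz: "Y *v z = norm (Y *v z) *\<^sub>R y"
    and wv: "\<forall>i<k. w \<bullet> v i = 0" and wz: "w \<bullet> z = 0"
  shows "(Y *v w) \<bullet> y = 0"
proof (cases "Y *v z = 0")
  case True
  then show ?thesis using zmax[OF wv] by simp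
next
  case False
  have "\<forall>i<k. (z + t *\<^sub>R w) \<bullet> v i = 0" for t
    using zv wv by (simp add: inner_add_left)
  then have "(Y *v z) \<bullet> (Y *v w) = 0"
    using zmax nz wz by (intro norm_maximiser_image_orthogonal[of "(*v) Y"])
      (auto simp: inner_commute matrix_vector_mul_linear)
  then show ?thesis
    using False by (subst (asm) Yz) (simp add: inner_commute)
qed

lemma partial_svd_upd:
  fixes Y :: "real^'n::finite^'m::finite"
  assumes "partial_svd Y k v u s"
    and nz: "norm z = 1" and zv: "\<forall>i<k. z \<bullet> v i = 0"
    and zmax: "\<And>w. \<forall>i<k. w \<bullet> v i = 0 \<Longrightarrow> norm (Y *v w) \<le> norm (Y *v z) * norm w"
    and ny: "norm y = 1" and yu: "\<forall>i<k. y \<bullet> u i = 0" and Yz: "Y *v z = norm (Y *v z) *\<^sub>R y"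
  shows "partial_svd Y (Suc k) (v(k := z)) (u(k := y)) (s(k := norm (Y *v z)))"
proof -
  have ov: "orthonormal_seq v k" and ou: "orthonormal_seq u k" and Yv: "\<forall>j<k. Y *v v j = s j *\<^sub>R u j"
    and s0: "\<forall>j<k. 0 \<le> s j" and sdec: "\<forall>j. Suc j < k \<longrightarrow> s (Suc j) \<le> s j"
    and perp: "\<And>w. \<forall>i<k. w \<bullet> v i = 0 \<Longrightarrow>
                 (\<forall>j<k. (Y *v w) \<bullet> u j = 0) \<and> (0 < k \<longrightarrow> norm (Y *v w) \<le> s (k - 1) * norm w)"
    using assms(1) unfolding partial_svd_def by blast+
  let ?\<sigma> = "norm (Y *v z)"
  have \<sigma>_le: "?\<sigma> \<le> s (k - 1)" if "0 < k"
    using perp[OF zv] that nz by simp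
  show ?thesis
    unfolding partial_svd_def
  proof (intro conjI)
    show "orthonormal_seq (v(k := z)) (Suc k)" by (rule orthonormal_seq_upd[OF ov zv nz])
    show "orthonormal_seq (u(k := y)) (Suc k)" by (rule orthonormal_seq_upd[OF ou yu ny])
    show "\<forall>j<Suc k. Y *v (v(k := z)) j = (s(k := ?\<sigma>)) j *\<^sub>R (u(k := y)) j"
      using Yv Yz by (auto simp: less_Suc_eq)
    show "\<forall>j<Suc k. 0 \<le> (s(k := ?\<sigma>)) j"
      using s0 by (auto simp: less_Suc_eq)
    show "\<forall>j. Suc j < Suc k \<longrightarrow> (s(k := ?\<sigma>)) (Suc j) \<le> (s(k := ?\<sigma>)) j"
    proof (intro allI impI)
      fix j assume "Suc j < Suc k"
      then show "(s(k := ?\<sigma>)) (Suc j) \<le> (s(k := ?\<sigma>)) j"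
        using sdec \<sigma>_le by (cases "Suc j = k") auto
    qed
    show "\<forall>w. (\<forall>i<Suc k. w \<bullet> (v(k := z)) i = 0) \<longrightarrow>
        (\<forall>j<Suc k. (Y *v w) \<bullet> (u(k := y)) j = 0) \<and>
        (0 < Suc k \<longrightarrow> norm (Y *v w) \<le> (s(k := ?\<sigma>)) (Suc k - 1) * norm w)"
    proof (intro allI impI)
      fix w assume "\<forall>i<Suc k. w \<bullet> (v(k := z)) i = 0"
      then have wv: "\<forall>i<k. w \<bullet> v i = 0" and wz: "w \<bullet> z = 0"
        by (auto simp: less_Suc_eq)
      have "(Y *v w) \<bullet> y = 0"
        using zmax nz zv Yz wv wz by (rule maximiser_direction_orthogonal_image)
      then show "(\<forall>j<Suc k. (Y *v w) \<bullet> (u(k := y)) j = 0) \<and>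
          (0 < Suc k \<longrightarrow> norm (Y *v w) \<le> (s(k := ?\<sigma>)) (Suc k - 1) * norm w)"
        using perp[OF wv] zmax[OF wv] by (auto simp: less_Suc_eq)
    qed
  qed
qed

lemma partial_svd_Suc:
  fixes Y :: "real^'n::finite^'m::finite"
  assumes inv: "partial_svd Y k v u s" and k: "k < CARD('n)" and nm: "CARD('n) \<le> CARD('m)"
  shows "\<exists>v' u' s'. partial_svd Y (Suc k) v' u' s'"
proof -
  obtain z where z: "norm z = 1" "\<forall>i<k. z \<bullet> v i = 0"
    "\<And>w. \<forall>i<k. w \<bullet> v i = 0 \<Longrightarrow> norm (Y *v w) \<le> norm (Y *v z) * norm w"
    using ex_norm_image_maximiser[OF k] by blast
  have "\<forall>i<k. (Y *v z) \<bullet> u i = 0"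
    using inv z(2) unfolding partial_svd_def by blast
  moreover have "k < CARD('m)"
    using k nm by simp
  ultimately obtain y where "norm y = 1" "\<forall>i<k. y \<bullet> u i = 0" "Y *v z = norm (Y *v z) *\<^sub>R y"
    using ex_unit_direction_orthogonal by blast
  then show ?thesis
    using partial_svd_upd[OF inv z] by blast
qed

lemma partial_svd_exists:
  fixes Y :: "real^'n::finite^'m::finite"
  assumes "k \<le> CARD('n)" "CARD('n) \<le> CARD('m)"
  shows "\<exists>v u s. partial_svd Y k v u s"
  using assms(1)
proof (induction k)
  case 0
  show ?case by (auto simp: partial_svd_def orthonormal_seq_def)
next
  case (Suc k)
  then show ?case using partial_svd_Suc assms(2) by (metis Suc_leD Suc_le_lessD)
qed

definition colmat :: "(nat \<Rightarrow> real^'m::finite) \<Rightarrow> real^'n::finite^'m" where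
  "colmat u = (\<chi> p j. u (idx j) $ p)"

lemma colmat_cong:
  "(\<And>k. k < CARD('n) \<Longrightarrow> u k = u' k) \<Longrightarrow> (colmat u :: real^'n::finite^'m::finite) = colmat u'"
  by (simp add: colmat_def vec_eq_iff)

lemma orthogonal_matrix_colmat:
  assumes "orthonormal_seq u CARD('n)"
  shows "orthogonal_matrix (colmat u :: real^'n::finite^'n)"
proof -
  have "column j (colmat u :: real^'n^'n) = u (idx j)" for j
    by (simp add: colmat_def column_def vec_eq_iff)
  then show ?thesis
    using assms unfolding orthogonal_matrix_orthonormal_columns orthonormal_seq_def
    by (auto simp: orthogonal_def norm_eq_1)
qed

lemma matrix_mul_colmat:
  "(A::real^'m::finite^'l::finite) ** (colmat u :: real^'n::finite^'m) = colmat (\<lambda>j. A *v u j)"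
  by (simp add: colmat_def matrix_matrix_mult_def matrix_vector_mult_def vec_eq_iff)

lemma colmat_mul_diag_mat:
  assumes "CARD('n) \<le> CARD('m)"
  shows "(colmat u :: real^'m::finite^'m) ** (diag_mat s :: real^'n::finite^'m) = colmat (\<lambda>j. s j *\<^sub>R u j)"
proof -
  have "(\<Sum>i::'m\<in>UNIV. u (idx i) $ p * (if idx i = idx j then s (idx i) else 0)) = s (idx j) * u (idx j) $ p"
    for p :: 'm and j :: 'n
  proof -
    obtain i0 :: 'm where i0: "idx i0 = idx j"
      using ex_idx_eq[of "idx j"] assms by (metis idx_less_card order_less_le_trans)
    have "u (idx i) $ p * (if idx i = idx j then s (idx i) else 0)
        = (if i = i0 then s (idx j) * u (idx j) $ p else 0)" for i
      using i0 by (auto dest: sym)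
    then show ?thesis by simp
  qed
  then show ?thesis
    by (simp add: colmat_def diag_mat_def matrix_matrix_mult_def vec_eq_iff)
qed

lemma ex_is_singvals_tall:
  fixes Y :: "real^'n::finite^'m::finite"
  assumes nm: "CARD('n) \<le> CARD('m)"
  shows "\<exists>s. is_singvals Y s"
proof -
  obtain v u s where "partial_svd Y CARD('n) v u s"
    using partial_svd_exists[OF order.refl nm] by blast
  then have ov: "orthonormal_seq v CARD('n)" and ou: "orthonormal_seq u CARD('n)"
    and Yv: "\<forall>j<CARD('n). Y *v v j = s j *\<^sub>R u j"
    and s0: "\<forall>j<CARD('n). 0 \<le> s j" and sdec: "\<forall>j. Suc j < CARD('n) \<longrightarrow> s (Suc j) \<le> s j"
    unfolding partial_svd_def by blast+
  obtain u' where ou': "orthonormal_seq u' CARD('m)" and u': "\<forall>i<CARD('n). u' i = u i"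
    using orthonormal_seq_extend[OF ou nm order.refl] by blast
  define s' where "s' k = (if k < CARD('n) then s k else 0)" for k
  define V :: "real^'n^'n" where "V = colmat v"
  define U :: "real^'m^'m" where "U = colmat u'"
  have V: "orthogonal_matrix V" and U: "orthogonal_matrix U"
    unfolding V_def U_def using ov ou' by (simp_all add: orthogonal_matrix_colmat)
  have "Y ** V = U ** diag_mat s'"
    unfolding V_def U_def matrix_mul_colmat colmat_mul_diag_mat[OF nm]
    using Yv u' by (intro colmat_cong) (simp add: s'_def)
  then have "Y = U ** diag_mat s' ** transpose V"
    using V by (metis matrix_mul_assoc matrix_mul_rid orthogonal_matrix_def)
  moreover have "\<forall>k. 0 \<le> s' k" "\<forall>k. s' (Suc k) \<le> s' k" "\<forall>k\<ge>min CARD('m) CARD('n). s' k = 0"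
    using s0 sdec nm by (auto simp: s'_def min_def)
  ultimately show ?thesis
    unfolding is_singvals_iff using U V by blast
qed

lemma is_singvals_transpose:
  fixes Y :: "real^'n::finite^'m::finite"
  assumes "is_singvals (transpose Y) s"
  shows "is_singvals Y s"
proof -
  obtain U V where U: "orthogonal_matrix U" and V: "orthogonal_matrix V"
    and Y: "transpose Y = U ** diag_mat s ** transpose V"
    and s: "\<forall>k. 0 \<le> s k" "\<forall>k. s (Suc k) \<le> s k" "\<forall>k\<ge>min CARD('n) CARD('m). s k = 0"
    using assms unfolding is_singvals_iff by blast
  have "transpose (diag_mat s :: real^'m^'n) = diag_mat s"
    by (auto simp: diag_mat_def transpose_def vec_eq_iff)
  then have "Y = V ** diag_mat s ** transpose U"
    using arg_cong[OF Y, of transpose] by (simp add: matrix_transpose_mul matrix_mul_assoc)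
  then show ?thesis
    unfolding is_singvals_iff using U V s by (auto simp: min.commute)
qed

lemma is_singvals_singvals: "is_singvals (Y::real^'n::finite^'m::finite) (singvals Y)"
proof -
  have "\<exists>s. is_singvals Y s"
  proof (cases "CARD('n) \<le> CARD('m)")
    case True
    then show ?thesis by (rule ex_is_singvals_tall)
  next
    case False
    then obtain s where "is_singvals (transpose Y) s"
      using ex_is_singvals_tall[of "transpose Y"] by auto
    then show ?thesis using is_singvals_transpose by blast
  qed
  then have "\<exists>!s. is_singvals Y s" using is_singvals_unique by blast
  then show ?thesis unfolding singvals_def by (rule theI')
qed

theorem lemmaC1:
  fixes f :: "real^'d::finite \<Rightarrow> real"
    and wbar :: "real^'m::finite" and xbar :: "real^'n::finite"
    and \<kappa> :: real
  assumes dim: "CARD('d) = min CARD('m) CARD('n)"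
    and cvx: "convex_on UNIV f"
    and sym: "symmetric_fun f"
    and sgn: "sign_invariant f"
    and kpos: "\<kappa> > 0"
    and sharp: "\<forall>(w::real^'m) (x::real^'n).
        f (sigma_vec (outer w x - outer wbar xbar)) - f (sigma_vec (outer wbar xbar - outer wbar xbar))
          \<ge> \<kappa> * norm (outer w x - outer wbar xbar)"
  shows "\<forall>(w::real^'m) (x::real^'n) Y. outer w x \<noteq> outer wbar xbar \<longrightarrow>
           Y \<in> subdiff (\<lambda>A. f (sigma_vec A :: real^'d)) (outer w x - outer wbar xbar) \<longrightarrow>
           singvals Y 0 + singvals Y 1 \<ge> \<kappa>"
proof (intro allI impI)
  fix w :: "real^'m" and x :: "real^'n" and Y
  assume ne: "outer w x \<noteq> outer wbar xbar"
    and Ysub: "Y \<in> subdiff (\<lambda>A. f (sigma_vec A :: real^'d)) (outer w x - outer wbar xbar)"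
  let ?X = "outer w x - outer wbar xbar"
  have "f (sigma_vec (0::real^'n^'m) :: real^'d) \<ge> f (sigma_vec ?X) + inner Y (0 - ?X)"
    using Ysub unfolding subdiff_def by blast
  moreover have "f (sigma_vec ?X :: real^'d) - f (sigma_vec (0::real^'n^'m)) \<ge> \<kappa> * norm ?X"
    using sharp by simp
  ultimately have "\<kappa> * norm ?X \<le> inner Y ?X"
    by (simp add: inner_diff_right)
  also have "\<dots> \<le> (singvals Y 0 + singvals Y 1) * norm ?X"
    by (rule is_singvals_inner_rank_two_le[OF is_singvals_singvals])
  finally show "singvals Y 0 + singvals Y 1 \<ge> \<kappa>"
    using ne by simp
qed

end
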